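(* For finite-dimensional $\mathcal H_X,\mathcal H_Y,\mathcal H_A,\mathcal H_B$, the set $\mathrm{LOCC}^*$ of maps from $\mathbf L(\mathcal H_X\otimes\mathcal H_Y)$ to $\mathbf L(\mathcal H_A\otimes\mathcal H_B)$ coincides with the set $\mathrm{SEP}$ of bipartite separable operations.
   Context: A quantum instrument with classical input $i$ is a family $\{\mathcal A_{o|i}\}_o$ (finite index sets) of completely positive linear maps with $\sum_o\mathcal A_{o|i}$ trace preserving for each $i$. $\mathrm{LOCC}^*$ is the set of completely positive trace preserving (CPTP) maps of the form $\mathcal M=\sum_{i_A,i_B,o_A,o_B}p(i_A,i_B|o_A,o_B)\,\mathcal A_{o_A|i_A}\otimes\mathcal B_{o_B|i_B}$, where $\{\mathcal A_{o_A|i_A}\}_{o_A}$ are instruments $\mathbf L(\mathcal H_X)\to\mathbf L(\mathcal H_A)$, $\{\mathcal B_{o_B|i_B}\}_{o_B}$ are instruments $\mathbf L(\mathcal H_Y)\to\mathbf L(\mathcal H_B)$, and $p(i_A,i_B|o_A,o_B)\ge0$ with $\sum_{i_A,i_B}p(i_A,i_B|o_A,o_B)=1$ for all $o_A,o_B$. $\mathrm{SEP}$ is the set of CPTP maps of the form $\sum_{k=1}^L\mathcal E^A_k\otimes\mathcal E^B_k$ with completely positive maps $\mathcal E^A_k:\mathbf L(\mathcal H_X)\to\mathbf L(\mathcal H_A)$, $\mathcal E^B_k:\mathbf L(\mathcal H_Y)\to\mathbf L(\mathcal H_B)$ (equivalently, CPTP maps with Kraus operators of product form $E_k\otimes F_k$).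 *)

theory Defs
  imports "HOL-Analysis.Analysis"
begin

text \<open>Operators on a finite-dimensional Hilbert space with orthonormal basis indexed by
  the finite type 'i are represented as matrices of type 'i => 'i => complex.
  The composite system X Y has basis indexed by 'x \<times> 'y.\<close>

type_synonym 'i op = "'i \<Rightarrow> 'i \<Rightarrow> complex"

definition matunit :: "'i \<Rightarrow> 'i \<Rightarrow> 'i op" where
  "matunit x x' = (\<lambda>i j. if i = x \<and> j = x' then 1 else 0)"

definition trace_op :: "('i::finite) op \<Rightarrow> complex" where
  "trace_op M = (\<Sum>i\<in>UNIV. M i i)"

definition psd_on :: "'i set \<Rightarrow> 'i op \<Rightarrow> bool" where
  "psd_on S M \<longleftrightarrow> (\<forall>v::'i \<Rightarrow> complex.
      let q = (\<Sum>i\<in>S. \<Sum>j\<in>S. cnj (v i) * M i j * v j) in Im q = 0 \<and> Re q \<ge> 0)"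

definition lin_map :: "('i op \<Rightarrow> 'j op) \<Rightarrow> bool" where
  "lin_map \<Phi> \<longleftrightarrow> (\<forall>M N. \<Phi> (\<lambda>i j. M i j + N i j) = (\<lambda>a b. \<Phi> M a b + \<Phi> N a b)) \<and>
                  (\<forall>c M. \<Phi> (\<lambda>i j. c * M i j) = (\<lambda>a b. c * \<Phi> M a b))"

text \<open>id_n tensor Phi, acting blockwise on operators on C^n tensor H (ancilla indices < n).\<close>
definition ampl :: "('i op \<Rightarrow> 'j op) \<Rightarrow> (nat \<times> 'i) op \<Rightarrow> (nat \<times> 'j) op" where
  "ampl \<Phi> M = (\<lambda>(k, a) (l, b). \<Phi> (\<lambda>x y. M (k, x) (l, y)) a b)"

definition CP :: "('i::finite op \<Rightarrow> 'j::finite op) \<Rightarrow> bool" where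
  "CP \<Phi> \<longleftrightarrow> lin_map \<Phi> \<and>
     (\<forall>n::nat. \<forall>M. psd_on ({..<n} \<times> UNIV) M \<longrightarrow> psd_on ({..<n} \<times> UNIV) (ampl \<Phi> M))"

definition TP :: "('i::finite op \<Rightarrow> 'j::finite op) \<Rightarrow> bool" where
  "TP \<Phi> \<longleftrightarrow> (\<forall>M. trace_op (\<Phi> M) = trace_op M)"

definition CPTP :: "('i::finite op \<Rightarrow> 'j::finite op) \<Rightarrow> bool" where
  "CPTP \<Phi> \<longleftrightarrow> CP \<Phi> \<and> TP \<Phi>"

text \<open>Tensor product of linear maps, defined on matrix units and extended linearly.\<close>
definition tensor_map ::
  "('x::finite op \<Rightarrow> 'a op) \<Rightarrow> ('y::finite op \<Rightarrow> 'b op) \<Rightarrow> ('x \<times> 'y) op \<Rightarrow> ('a \<times> 'b) op" where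
  "tensor_map \<Phi> \<Psi> M = (\<lambda>(a, b) (a', b').
     \<Sum>x\<in>UNIV. \<Sum>x'\<in>UNIV. \<Sum>y\<in>UNIV. \<Sum>y'\<in>UNIV.
        M (x, y) (x', y') * \<Phi> (matunit x x') a a' * \<Psi> (matunit y y') b b')"

text \<open>A family of instruments with classical inputs I and outcomes O (finite index sets);
  A ot i is the CP map for outcome o given input i.\<close>
definition instruments ::
  "nat set \<Rightarrow> nat set \<Rightarrow> (nat \<Rightarrow> nat \<Rightarrow> ('i::finite op \<Rightarrow> 'j::finite op)) \<Rightarrow> bool" where
  "instruments Ins Outs A \<longleftrightarrow> finite Ins \<and> finite Outs \<and>
     (\<forall>i\<in>Ins. \<forall>ot\<in>Outs. CP (A ot i)) \<and>
     (\<forall>i\<in>Ins. TP (\<lambda>M a b. \<Sum>ot\<in>Outs. A ot i M a b))"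

definition LOCC_star ::
  "(('x::finite \<times> 'y::finite) op \<Rightarrow> ('a::finite \<times> 'b::finite) op) set" where
  "LOCC_star = {\<M>. CPTP \<M> \<and>
     (\<exists>IA OA IB OB (A :: nat \<Rightarrow> nat \<Rightarrow> ('x op \<Rightarrow> 'a op)) (B :: nat \<Rightarrow> nat \<Rightarrow> ('y op \<Rightarrow> 'b op))
        (p :: nat \<Rightarrow> nat \<Rightarrow> nat \<Rightarrow> nat \<Rightarrow> real).
        instruments IA OA A \<and> instruments IB OB B \<and>
        (\<forall>iA\<in>IA. \<forall>iB\<in>IB. \<forall>oA\<in>OA. \<forall>oB\<in>OB. p iA iB oA oB \<ge> 0) \<and>
        (\<forall>oA\<in>OA. \<forall>oB\<in>OB. (\<Sum>iA\<in>IA. \<Sum>iB\<in>IB. p iA iB oA oB) = 1) \<and>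
        \<M> = (\<lambda>\<rho> u v. \<Sum>iA\<in>IA. \<Sum>iB\<in>IB. \<Sum>oA\<in>OA. \<Sum>oB\<in>OB.
               complex_of_real (p iA iB oA oB) * tensor_map (A oA iA) (B oB iB) \<rho> u v))}"

definition SEP ::
  "(('x::finite \<times> 'y::finite) op \<Rightarrow> ('a::finite \<times> 'b::finite) op) set" where
  "SEP = {\<M>. CPTP \<M> \<and>
     (\<exists>(L::nat) (EA :: nat \<Rightarrow> ('x op \<Rightarrow> 'a op)) (EB :: nat \<Rightarrow> ('y op \<Rightarrow> 'b op)).
        (\<forall>k\<in>{1..L}. CP (EA k) \<and> CP (EB k)) \<and>
        \<M> = (\<lambda>\<rho> u v. \<Sum>k\<in>{1..L}. tensor_map (EA k) (EB k) \<rho> u v))}"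

end

theory Submission
  imports Defs "HOL-Library.Nat_Bijection"
begin

(*
  LOCC* is contained in SEP: absorbing each weight p(i_A, i_B | o_A, o_B) into Alice's map turns
  every term of an LOCC* map into a tensor product of CP maps, and the finite quadruple sum is
  reindexed by {1..L}.

  SEP is contained in LOCC*: let M = \<Sum>_k E_k \<otimes> F_k be trace preserving. Evaluating M on
  \<rho> \<otimes> 1 and 1 \<otimes> \<sigma> shows that with \<alpha>_k = tr F_k(1) / d_Y and \<beta>_k = tr E_k(1) / d_X the
  families {\<alpha>_k E_k} and {\<beta>_k F_k} are instruments. Alice measures k; Bob receives one of R
  inputs r and reports (r, k). Since p(. | o_A, o_B) only has to be a distribution over inputs, it
  may send weight to inputs at which the reported outcome is impossible: given (k', (r, k)), input r
  gets w_k if k' = k and input r + 1 mod R gets the rest. The R inputs then contribute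
  R w_k \<alpha>_k \<beta>_k E_k \<otimes> F_k, which is E_k \<otimes> F_k for w_k = 1 / (R \<alpha>_k \<beta>_k) \<in> [0, 1] once R is
  large; terms with \<alpha>_k \<beta>_k = 0 vanish by complete positivity.
*)

definition qform :: "'i set \<Rightarrow> 'i op \<Rightarrow> ('i \<Rightarrow> complex) \<Rightarrow> complex" where
  "qform S M v = (\<Sum>i\<in>S. \<Sum>j\<in>S. cnj (v i) * M i j * v j)"

definition id_op :: "'i op" where
  "id_op = (\<lambda>i j. if i = j then 1 else 0)"

definition op_tensor :: "'x op \<Rightarrow> 'y op \<Rightarrow> ('x \<times> 'y) op" where
  "op_tensor \<rho> \<sigma> = (\<lambda>(x, y) (x', y'). \<rho> x x' * \<sigma> y y')"

lemma if_zero_mult [simp]: "(if P then a else 0) * z = (if P then a * z else (0::'a::mult_zero))"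
  by simp

lemma mult_if_zero [simp]: "z * (if P then a else 0) = (if P then z * a else (0::'a::mult_zero))"
  by simp

lemma psd_on_iff_qform: "psd_on S M \<longleftrightarrow> (\<forall>v. 0 \<le> qform S M v)"
  by (auto simp: psd_on_def qform_def less_eq_complex_def Let_def)

lemma qform_lincomb:
  "qform S (\<lambda>i j. c * P i j + d * Q i j) v = c * qform S P v + d * qform S Q v"
  unfolding qform_def by (simp add: algebra_simps sum.distrib sum_distrib_left)

lemma qform_scale: "qform S (\<lambda>i j. c * P i j) v = c * qform S P v"
  using qform_lincomb[of S c P 0 P v] by simp

lemma qform_basis_vector:
  fixes \<rho> :: "'i::finite op"
  shows "qform UNIV \<rho> (\<lambda>i. if i = x then a else 0) = cnj a * \<rho> x x * a"
  unfolding qform_def by (simp add: if_distrib[of cnj] cong: if_cong)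

lemma qform_two_basis_vectors:
  fixes \<rho> :: "'i::finite op"
  assumes "x \<noteq> y"
  shows "qform UNIV \<rho> (\<lambda>i. if i = x then a else if i = y then b else 0) =
    cnj a * \<rho> x x * a + cnj a * \<rho> x y * b + cnj b * \<rho> y x * a + cnj b * \<rho> y y * b"
proof -
  have split: "(\<lambda>i. if i = x then a else if i = y then b else 0) =
      (\<lambda>i. (if i = x then a else 0) + (if i = y then b else 0))"
    using assms by auto
  show ?thesis
    unfolding qform_def split
    by (simp add: distrib_left distrib_right sum.distrib assms if_distrib[of cnj] cong: if_cong)
qed

lemma nonneg_sesquilinear_imp_zero:
  fixes a b :: complex
  assumes "\<And>t. 0 \<le> cnj t * a + t * b"
  shows "a = 0 \<and> b = 0"
proof -
  have "0 \<le> a + b" using assms[of 1] by simp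
  moreover have "0 \<le> - a - b" using assms[of "-1"] by simp
  moreover have "0 \<le> \<i> * (b - a)" using assms[of \<i>] by (simp add: algebra_simps)
  moreover have "0 \<le> \<i> * (a - b)" using assms[of "-\<i>"] by (simp add: algebra_simps)
  ultimately show ?thesis by (simp add: less_eq_complex_def complex_eq_iff)
qed

lemma psd_diag_nonneg:
  fixes \<rho> :: "'i::finite op"
  assumes "psd_on UNIV \<rho>"
  shows "0 \<le> \<rho> x x"
  using assms[unfolded psd_on_iff_qform, rule_format, of "\<lambda>i. if i = x then 1 else 0"]
  by (simp add: qform_basis_vector)

lemma psd_zero_diag_imp_zero:
  fixes \<rho> :: "'i::finite op"
  assumes psd: "psd_on UNIV \<rho>" and diag: "\<And>x. \<rho> x x = 0"
  shows "\<rho> = (\<lambda>_ _. 0)"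
proof (intro ext)
  fix x y
  show "\<rho> x y = 0"
  proof (cases "x = y")
    case False
    have "0 \<le> cnj t * \<rho> y x + t * \<rho> x y" for t
    proof -
      have "0 \<le> qform UNIV \<rho> (\<lambda>i. if i = x then 1 else if i = y then t else 0)"
        using psd by (simp add: psd_on_iff_qform)
      then show ?thesis by (simp add: qform_two_basis_vectors[OF False] diag add.commute mult.commute)
    qed
    then show ?thesis using nonneg_sesquilinear_imp_zero by blast
  qed (simp add: diag)
qed

lemma psd_trace_nonneg: "psd_on UNIV \<rho> \<Longrightarrow> 0 \<le> trace_op \<rho>" for \<rho> :: "'i::finite op"
  unfolding trace_op_def by (simp add: sum_nonneg psd_diag_nonneg)

lemma psd_trace_zero_imp_zero:
  fixes \<rho> :: "'i::finite op"
  assumes "psd_on UNIV \<rho>" "trace_op \<rho> = 0"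
  shows "\<rho> = (\<lambda>_ _. 0)"
  using assms psd_diag_nonneg[OF assms(1)]
  by (intro psd_zero_diag_imp_zero) (auto simp: trace_op_def sum_nonneg_eq_0_iff)

lemma psd_rank_one: "psd_on UNIV (\<lambda>i j. v i * cnj (v j))"
  unfolding psd_on_iff_qform
proof
  fix w
  define z where "z = (\<Sum>i\<in>UNIV. cnj (w i) * v i)"
  have "qform UNIV (\<lambda>i j. v i * cnj (v j)) w = z * cnj z"
    unfolding qform_def z_def by (simp add: sum_product algebra_simps)
  then show "0 \<le> qform UNIV (\<lambda>i j. v i * cnj (v j)) w"
    by (simp add: complex_mult_cnj less_eq_complex_def)
qed

lemma psd_matunit_diag: "psd_on UNIV (matunit x x)"
proof -
  have "matunit x x = (\<lambda>i j. (if i = x then 1 else 0) * cnj (if j = x then 1 else 0))"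
    by (auto simp: matunit_def fun_eq_iff)
  then show ?thesis by (simp only: psd_rank_one)
qed

lemma psd_id_op: "psd_on UNIV (id_op :: 'i::finite op)"
proof -
  have "qform UNIV id_op v = (\<Sum>i\<in>UNIV. complex_of_real ((Re (v i))\<^sup>2 + (Im (v i))\<^sup>2))" for v :: "'i \<Rightarrow> complex"
    by (simp add: qform_def id_op_def complex_mult_cnj mult.commute cong: if_cong)
  then show ?thesis
    by (simp add: psd_on_iff_qform less_eq_complex_def Re_sum Im_sum sum_nonneg)
qed

lemma qform_zero_imp_zero:
  fixes G :: "'i::finite op"
  assumes "\<And>w. qform UNIV G w = 0"
  shows "G = (\<lambda>_ _. 0)"
proof (rule psd_zero_diag_imp_zero)
  show "psd_on UNIV G" by (simp add: psd_on_iff_qform assms)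
  show "G x x = 0" for x using assms[of "\<lambda>i. if i = x then 1 else 0"] by (simp add: qform_basis_vector)
qed

lemma lin_map_add: "lin_map \<Phi> \<Longrightarrow> \<Phi> (\<lambda>i j. M i j + N i j) = (\<lambda>a b. \<Phi> M a b + \<Phi> N a b)"
  unfolding lin_map_def by blast

lemma lin_map_scale: "lin_map \<Phi> \<Longrightarrow> \<Phi> (\<lambda>i j. c * M i j) = (\<lambda>a b. c * \<Phi> M a b)"
  unfolding lin_map_def by blast

lemma lin_map_zero: "lin_map \<Phi> \<Longrightarrow> \<Phi> (\<lambda>i j. 0) = (\<lambda>a b. 0)"
  using lin_map_scale[of \<Phi> 0 "\<lambda>i j. 0"] by simp

lemma lin_map_sum:
  assumes "lin_map \<Phi>" "finite S"
  shows "\<Phi> (\<lambda>i j. \<Sum>s\<in>S. f s i j) = (\<lambda>a b. \<Sum>s\<in>S. \<Phi> (f s) a b)"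
  using assms(2)
proof (induction S rule: finite_induct)
  case empty
  then show ?case using lin_map_zero[OF assms(1)] by simp
next
  case (insert s S)
  then show ?case using lin_map_add[OF assms(1), of "f s" "\<lambda>i j. \<Sum>s\<in>S. f s i j"] by simp
qed

lemma op_matunit_expansion: "M = (\<lambda>i j. \<Sum>x\<in>UNIV. \<Sum>x'\<in>UNIV. M x x' * matunit x x' i j)"
  for M :: "'i::finite op"
proof (intro ext)
  fix i j
  have "(\<Sum>x'\<in>UNIV. M x x' * matunit x x' i j) = (if x = i then M x j else 0)" for x
    by (cases "x = i") (simp_all add: matunit_def)
  then show "M i j = (\<Sum>x\<in>UNIV. \<Sum>x'\<in>UNIV. M x x' * matunit x x' i j)" by simp
qed

lemma lin_map_matunit_expansion:
  fixes \<Phi> :: "'i::finite op \<Rightarrow> 'j op"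
  assumes "lin_map \<Phi>"
  shows "\<Phi> M = (\<lambda>a b. \<Sum>x\<in>UNIV. \<Sum>x'\<in>UNIV. M x x' * \<Phi> (matunit x x') a b)"
  by (subst op_matunit_expansion) (simp add: lin_map_sum[OF assms] lin_map_scale[OF assms])

lemma CP_lin_map: "CP \<Phi> \<Longrightarrow> lin_map \<Phi>"
  unfolding CP_def by blast

lemma CP_psd:
  fixes \<Phi> :: "'i::finite op \<Rightarrow> 'j::finite op"
  assumes "CP \<Phi>" "psd_on UNIV \<rho>"
  shows "psd_on UNIV (\<Phi> \<rho>)"
proof -
  have one_block: "(\<Sum>p\<in>{..<Suc 0} \<times> UNIV. g p) = (\<Sum>x\<in>UNIV. g (0, x))"
    for g :: "nat \<times> 'k::finite \<Rightarrow> complex"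
    by (simp add: sum.cartesian_product' lessThan_Suc)
  define M :: "(nat \<times> 'i) op" where "M = (\<lambda>(k, x) (l, y). \<rho> x y)"
  have "psd_on ({..<Suc 0} \<times> UNIV) M"
    using assms(2) unfolding psd_on_iff_qform qform_def one_block by (simp add: M_def)
  then have "psd_on ({..<Suc 0} \<times> UNIV) (ampl \<Phi> M)"
    using assms(1) unfolding CP_def by blast
  then have "0 \<le> qform ({..<Suc 0} \<times> UNIV) (ampl \<Phi> M) (\<lambda>(k, a). v a)" for v
    unfolding psd_on_iff_qform by blast
  then show ?thesis
    unfolding psd_on_iff_qform qform_def one_block by (simp add: M_def ampl_def)
qed

lemma CP_scale:
  assumes "CP \<Phi>" "0 \<le> c"
  shows "CP (\<lambda>M a b. complex_of_real c * \<Phi> M a b)"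
proof -
  have lin: "lin_map \<Phi>" using assms(1) by (rule CP_lin_map)
  have "lin_map (\<lambda>M a b. complex_of_real c * \<Phi> M a b)"
    unfolding lin_map_def by (simp add: lin_map_add[OF lin] lin_map_scale[OF lin] algebra_simps)
  moreover have "ampl (\<lambda>M a b. complex_of_real c * \<Phi> M a b) M = (\<lambda>x y. complex_of_real c * ampl \<Phi> M x y)"
    for M :: "(nat \<times> _) op"
    by (auto simp: ampl_def fun_eq_iff)
  moreover have "0 \<le> complex_of_real c" using assms(2) by (simp add: less_eq_complex_def)
  ultimately show ?thesis
    using assms(1) unfolding CP_def psd_on_iff_qform by (simp add: qform_scale mult_nonneg_nonneg)
qed

lemma CP_zero: "CP (\<lambda>M (a::'j::finite) (b::'j). 0::complex)"
  by (simp add: CP_def lin_map_def psd_on_iff_qform qform_def ampl_def case_prod_unfold)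

lemma CP_matunit_offdiag_zero:
  fixes F :: "'i::finite op \<Rightarrow> 'j::finite op"
  assumes cp: "CP F" and diag: "\<And>y. F (matunit y y) = (\<lambda>_ _. 0)"
  shows "F (matunit y y') = (\<lambda>_ _. 0)"
proof (cases "y = y'")
  case False
  have "0 \<le> cnj t * qform UNIV (F (matunit y y')) w + t * qform UNIV (F (matunit y' y)) w" for t w
  proof -
    define v where "v = (\<lambda>i. if i = y then 1 else if i = y' then t else 0)"
    have cnj_v: "(\<lambda>i. cnj (v i)) = (\<lambda>i. if i = y then 1 else if i = y' then cnj t else 0)"
      unfolding v_def by auto
    have "F (\<lambda>i j. v i * cnj (v j)) a b = cnj t * F (matunit y y') a b + t * F (matunit y' y) a b"
      for a b
    proof -
      have "F (\<lambda>i j. v i * cnj (v j)) a b = qform UNIV (\<lambda>i j. F (matunit i j) a b) (\<lambda>i. cnj (v i))"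
        using lin_map_matunit_expansion[OF CP_lin_map[OF cp], of "\<lambda>i j. v i * cnj (v j)"]
        unfolding qform_def by (simp add: algebra_simps)
      also have "\<dots> = cnj t * F (matunit y y') a b + t * F (matunit y' y) a b"
        unfolding cnj_v qform_two_basis_vectors[OF False] using diag by (simp add: algebra_simps)
      finally show ?thesis .
    qed
    then have "F (\<lambda>i j. v i * cnj (v j)) = (\<lambda>a b. cnj t * F (matunit y y') a b + t * F (matunit y' y) a b)"
      by (intro ext)
    then have "psd_on UNIV (\<lambda>a b. cnj t * F (matunit y y') a b + t * F (matunit y' y) a b)"
      using CP_psd[OF cp psd_rank_one, of v] by argo
    then show ?thesis
      unfolding psd_on_iff_qform qform_lincomb by blast
  qed
  then have "qform UNIV (F (matunit y y')) w = 0" for w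
    using nonneg_sesquilinear_imp_zero by blast
  then show ?thesis by (rule qform_zero_imp_zero)
qed (simp add: diag)

lemma lin_map_id_op:
  fixes F :: "'i::finite op \<Rightarrow> 'j op"
  assumes "lin_map F"
  shows "F id_op = (\<lambda>a b. \<Sum>y\<in>UNIV. F (matunit y y) a b)"
  by (subst lin_map_matunit_expansion[OF assms]) (simp add: id_op_def)

lemma CP_trace_id_zero_imp_zero:
  fixes F :: "'i::finite op \<Rightarrow> 'j::finite op"
  assumes cp: "CP F" and trace: "trace_op (F id_op) = 0"
  shows "F = (\<lambda>M a b. 0)"
proof -
  have psd: "psd_on UNIV (F (matunit y y))" for y
    using CP_psd[OF cp psd_matunit_diag] .
  have "(\<Sum>y\<in>UNIV. trace_op (F (matunit y y))) = 0"
    using trace unfolding lin_map_id_op[OF CP_lin_map[OF cp]] trace_op_def by (subst sum.swap) simp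
  then have "trace_op (F (matunit y y)) = 0" for y
    by (simp add: sum_nonneg_eq_0_iff psd_trace_nonneg psd)
  then have "F (matunit y y) = (\<lambda>_ _. 0)" for y
    using psd_trace_zero_imp_zero psd by blast
  then have "F (matunit y y') = (\<lambda>_ _. 0)" for y y'
    using CP_matunit_offdiag_zero[OF cp] by blast
  then have "F M = (\<lambda>a b. 0)" for M
    by (simp add: lin_map_matunit_expansion[OF CP_lin_map[OF cp], of M])
  then show ?thesis by blast
qed

lemma tensor_map_scale_left:
  "tensor_map (\<lambda>M a b. c * \<Phi> M a b) \<Psi> = (\<lambda>M u v. c * tensor_map \<Phi> \<Psi> M u v)"
  by (auto simp: tensor_map_def fun_eq_iff sum_distrib_left algebra_simps)

lemma tensor_map_scale_right:
  "tensor_map \<Phi> (\<lambda>M a b. c * \<Psi> M a b) = (\<lambda>M u v. c * tensor_map \<Phi> \<Psi> M u v)"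
  by (auto simp: tensor_map_def fun_eq_iff sum_distrib_left algebra_simps)

lemma tensor_map_zero_left: "tensor_map (\<lambda>M a b. 0) \<Psi> = (\<lambda>M u v. 0)"
  by (auto simp: tensor_map_def fun_eq_iff)

lemma tensor_map_zero_right: "tensor_map \<Phi> (\<lambda>M a b. 0) = (\<lambda>M u v. 0)"
  by (auto simp: tensor_map_def fun_eq_iff)

lemma tensor_map_op_tensor:
  assumes "lin_map \<Phi>" "lin_map \<Psi>"
  shows "tensor_map \<Phi> \<Psi> (op_tensor \<rho> \<sigma>) = op_tensor (\<Phi> \<rho>) (\<Psi> \<sigma>)"
proof (intro ext, clarify)
  fix a b a' b'
  have "tensor_map \<Phi> \<Psi> (op_tensor \<rho> \<sigma>) (a, b) (a', b') =
      (\<Sum>x\<in>UNIV. \<Sum>x'\<in>UNIV. \<rho> x x' * \<Phi> (matunit x x') a a' *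
        (\<Sum>y\<in>UNIV. \<Sum>y'\<in>UNIV. \<sigma> y y' * \<Psi> (matunit y y') b b'))"
    by (simp add: tensor_map_def op_tensor_def sum_distrib_left algebra_simps)
  also have "\<dots> = (\<Sum>x\<in>UNIV. \<Sum>x'\<in>UNIV. \<rho> x x' * \<Phi> (matunit x x') a a') *
      (\<Sum>y\<in>UNIV. \<Sum>y'\<in>UNIV. \<sigma> y y' * \<Psi> (matunit y y') b b')"
    by (simp add: sum_distrib_right)
  also have "\<dots> = op_tensor (\<Phi> \<rho>) (\<Psi> \<sigma>) (a, b) (a', b')"
    by (simp add: op_tensor_def lin_map_matunit_expansion[OF assms(1), of \<rho>]
        lin_map_matunit_expansion[OF assms(2), of \<sigma>])
  finally show "tensor_map \<Phi> \<Psi> (op_tensor \<rho> \<sigma>) (a, b) (a', b') = op_tensor (\<Phi> \<rho>) (\<Psi> \<sigma>) (a, b) (a', b')" .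
qed

lemma trace_op_tensor: "trace_op (op_tensor \<rho> \<sigma>) = trace_op \<rho> * trace_op \<sigma>"
  by (simp add: trace_op_def op_tensor_def sum_product sum.cartesian_product' flip: UNIV_Times_UNIV)

lemma trace_op_sum: "trace_op (\<lambda>u v. \<Sum>k\<in>K. f k u v) = (\<Sum>k\<in>K. trace_op (f k))"
  unfolding trace_op_def by (rule sum.swap)

lemma trace_op_scale: "trace_op (\<lambda>u v. c * f u v) = c * trace_op f"
  unfolding trace_op_def by (simp add: sum_distrib_left)

lemma trace_id_op: "trace_op (id_op :: 'i::finite op) = of_nat CARD('i)"
  by (simp add: trace_op_def id_op_def)

lemma TP_sum_tensor_map_product_traces:
  assumes "TP (\<lambda>\<rho> u v. \<Sum>k\<in>K. tensor_map (E k) (F k) \<rho> u v)"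
    and "\<forall>k\<in>K. lin_map (E k) \<and> lin_map (F k)"
  shows "(\<Sum>k\<in>K. trace_op (E k \<rho>) * trace_op (F k \<sigma>)) = trace_op \<rho> * trace_op \<sigma>"
proof -
  have "(\<Sum>k\<in>K. trace_op (E k \<rho>) * trace_op (F k \<sigma>)) =
      (\<Sum>k\<in>K. trace_op (tensor_map (E k) (F k) (op_tensor \<rho> \<sigma>)))"
    using assms(2) by (simp add: tensor_map_op_tensor trace_op_tensor)
  also have "\<dots> = trace_op (op_tensor \<rho> \<sigma>)"
    using assms(1) unfolding TP_def trace_op_sum[symmetric] by blast
  finally show ?thesis by (simp add: trace_op_tensor)
qed

lemma LOCC_star_subset_SEP:
  "(LOCC_star :: (('x::finite \<times> 'y::finite) op \<Rightarrow> ('a::finite \<times> 'b::finite) op) set) \<subseteq> SEP"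
proof
  fix \<M> :: "('x \<times> 'y) op \<Rightarrow> ('a \<times> 'b) op"
  assume "\<M> \<in> LOCC_star"
  then obtain IA OA IB OB and A :: "nat \<Rightarrow> nat \<Rightarrow> 'x op \<Rightarrow> 'a op"
    and B :: "nat \<Rightarrow> nat \<Rightarrow> 'y op \<Rightarrow> 'b op" and p :: "nat \<Rightarrow> nat \<Rightarrow> nat \<Rightarrow> nat \<Rightarrow> real"
    where CPTP: "CPTP \<M>" and A: "instruments IA OA A" and B: "instruments IB OB B"
      and p: "\<forall>iA\<in>IA. \<forall>iB\<in>IB. \<forall>oA\<in>OA. \<forall>oB\<in>OB. 0 \<le> p iA iB oA oB"
      and \<M>: "\<M> = (\<lambda>\<rho> u v. \<Sum>iA\<in>IA. \<Sum>iB\<in>IB. \<Sum>oA\<in>OA. \<Sum>oB\<in>OB.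
        complex_of_real (p iA iB oA oB) * tensor_map (A oA iA) (B oB iB) \<rho> u v)"
    unfolding LOCC_star_def by blast
  define S where "S = IA \<times> IB \<times> OA \<times> OB"
  have "finite S" using A B unfolding S_def instruments_def by auto
  then obtain h where h: "bij_betw h {1..card S} S"
    using ex_bij_betw_nat_finite_1 by blast
  define E where "E k = (case h k of (iA, iB, oA, oB) \<Rightarrow>
    (\<lambda>M a b. complex_of_real (p iA iB oA oB) * A oA iA M a b))" for k
  define F where "F k = (case h k of (iA, iB, oA, oB) \<Rightarrow> B oB iB)" for k
  have "CP (E k) \<and> CP (F k)" if "k \<in> {1..card S}" for k
  proof -
    obtain iA iB oA oB where hk: "h k = (iA, iB, oA, oB)" by (cases "h k") auto
    have "h k \<in> S" using h that by (auto simp: bij_betw_def)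
    then show ?thesis
      unfolding E_def F_def hk using A B p by (auto simp: S_def instruments_def intro!: CP_scale)
  qed
  moreover have "\<M> = (\<lambda>\<rho> u v. \<Sum>k\<in>{1..card S}. tensor_map (E k) (F k) \<rho> u v)"
  proof (intro ext)
    fix \<rho> u v
    define G where "G s = (case s of (iA, iB, oA, oB) \<Rightarrow>
      complex_of_real (p iA iB oA oB) * tensor_map (A oA iA) (B oB iB) \<rho> u v)" for s
    have "(\<Sum>k\<in>{1..card S}. tensor_map (E k) (F k) \<rho> u v) = (\<Sum>k\<in>{1..card S}. G (h k))"
      by (intro sum.cong refl)
        (auto simp: E_def F_def G_def tensor_map_scale_left split: prod.split)
    also have "\<dots> = sum G S" by (rule sum.reindex_bij_betw[OF h])
    also have "\<dots> = \<M> \<rho> u v"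
      unfolding S_def G_def \<M> by (simp add: sum.cartesian_product')
    finally show "\<M> \<rho> u v = (\<Sum>k\<in>{1..card S}. tensor_map (E k) (F k) \<rho> u v)" ..
  qed
  ultimately show "\<M> \<in> SEP"
    unfolding SEP_def using CPTP by blast
qed

definition weighted_instrument ::
  "(nat \<Rightarrow> real) \<Rightarrow> (nat \<Rightarrow> 'i op \<Rightarrow> 'j op) \<Rightarrow> nat \<Rightarrow> nat \<Rightarrow> ('i op \<Rightarrow> 'j op)" where
  "weighted_instrument c E k i = (\<lambda>M a b. complex_of_real (c k) * E k M a b)"

lemma instruments_weighted_instrument:
  assumes "finite Ins" "finite K" "\<forall>k\<in>K. CP (E k) \<and> 0 \<le> c k"
    and "\<And>\<rho>. (\<Sum>k\<in>K. complex_of_real (c k) * trace_op (E k \<rho>)) = trace_op \<rho>"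
  shows "instruments Ins K (weighted_instrument c E)"
  using assms by (simp add: instruments_def weighted_instrument_def CP_scale TP_def trace_op_sum trace_op_scale)

definition input_tagged ::
  "(nat \<Rightarrow> nat \<Rightarrow> ('i op \<Rightarrow> 'j op)) \<Rightarrow> nat \<Rightarrow> nat \<Rightarrow> ('i op \<Rightarrow> 'j op)" where
  "input_tagged A ot i = (case prod_decode ot of (r, k) \<Rightarrow> if r = i then A k i else (\<lambda>M a b. 0))"

lemma input_tagged_encode:
  "input_tagged A (prod_encode (r, k)) i = (if r = i then A k i else (\<lambda>M a b. 0))"
  by (simp add: input_tagged_def)

lemma instruments_input_tagged:
  assumes "instruments Ins K A"
  shows "instruments Ins (prod_encode ` (Ins \<times> K)) (input_tagged A)"
  unfolding instruments_def
proof (intro conjI ballI)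
  show "finite (prod_encode ` (Ins \<times> K))" "finite Ins"
    using assms by (simp_all add: instruments_def)
  show "CP (input_tagged A ot i)" if "i \<in> Ins" "ot \<in> prod_encode ` (Ins \<times> K)" for i ot
    using that assms by (auto simp: input_tagged_encode instruments_def CP_zero)
  show "TP (\<lambda>M a b. \<Sum>ot\<in>prod_encode ` (Ins \<times> K). input_tagged A ot i M a b)" if "i \<in> Ins" for i
  proof -
    have "(\<Sum>ot\<in>prod_encode ` (Ins \<times> K). input_tagged A ot i M a b) = (\<Sum>k\<in>K. A k i M a b)"
      for M a b
    proof -
      have "(\<Sum>ot\<in>prod_encode ` (Ins \<times> K). input_tagged A ot i M a b)
          = (\<Sum>r\<in>Ins. \<Sum>k\<in>K. input_tagged A (prod_encode (r, k)) i M a b)"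
        by (simp add: sum.reindex inj_on_def sum.cartesian_product')
      also have "\<dots> = (\<Sum>k\<in>K. \<Sum>r\<in>Ins. if r = i then A k i M a b else 0)"
        by (subst sum.swap) (simp add: input_tagged_encode if_distrib[of "\<lambda>F. F M a b"] cong: if_cong)
      finally show ?thesis using that assms by (simp add: instruments_def)
    qed
    then show ?thesis using that assms by (simp add: instruments_def)
  qed
qed

text \<open>The input iA is ignored. Weight not given to input r goes to input r + 1 mod R, at which
  Bob's outcome prod_encode (r, k) cannot occur.\<close>
definition postselection_prob :: "nat \<Rightarrow> (nat \<Rightarrow> real) \<Rightarrow> nat \<Rightarrow> nat \<Rightarrow> nat \<Rightarrow> nat \<Rightarrow> real" where
  "postselection_prob R w iA iB oA oB = (case prod_decode oB of (r, k) \<Rightarrow>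
     if iB = r then (if oA = k then w k else 0)
     else if iB = Suc r mod R then (if oA = k then 1 - w k else 1)
     else 0)"

lemma postselection_prob_nonneg:
  assumes "\<forall>k\<in>K. 0 \<le> w k \<and> w k \<le> 1" "oB \<in> prod_encode ` (Rs \<times> K)"
  shows "0 \<le> postselection_prob R w iA iB oA oB"
  using assms by (auto simp: postselection_prob_def)

lemma postselection_prob_sum:
  assumes "2 \<le> R" "r < R"
  shows "(\<Sum>iB<R. postselection_prob R w iA iB oA (prod_encode (r, k))) = 1"
proof -
  have "Suc r mod R \<noteq> r"
    using assms by (cases "Suc r = R") auto
  moreover have "Suc r mod R < R" using assms by simp
  ultimately have "(\<Sum>iB<R. postselection_prob R w iA iB oA (prod_encode (r, k))) =
      (\<Sum>iB<R. (if iB = r then (if oA = k then w k else 0) else 0) +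
        (if iB = Suc r mod R then (if oA = k then 1 - w k else 1) else 0))"
    by (intro sum.cong) (auto simp: postselection_prob_def)
  also have "\<dots> = 1" using assms \<open>Suc r mod R < R\<close> by (simp add: sum.distrib)
  finally show ?thesis .
qed

lemma postselection_sum:
  assumes "finite K"
  shows "(\<Sum>iB<R. \<Sum>oA\<in>K. \<Sum>oB\<in>prod_encode ` ({..<R} \<times> K).
      complex_of_real (postselection_prob R w iA iB oA oB) * tensor_map (A oA) (input_tagged B oB iB) \<rho> u v) =
    (\<Sum>iB<R. \<Sum>k\<in>K. complex_of_real (w k) * tensor_map (A k) (B k iB) \<rho> u v)"
proof (intro sum.cong refl)
  fix iB oA assume "iB \<in> {..<R}" "oA \<in> K"
  have summand: "complex_of_real (postselection_prob R w iA iB oA (prod_encode rk)) *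
      tensor_map (A oA) (input_tagged B (prod_encode rk) iB) \<rho> u v =
    (if rk = (iB, oA) then complex_of_real (w oA) * tensor_map (A oA) (B oA iB) \<rho> u v else 0)" for rk
    by (cases rk) (auto simp: postselection_prob_def input_tagged_encode tensor_map_zero_right)
  have "(\<Sum>oB\<in>prod_encode ` ({..<R} \<times> K).
      complex_of_real (postselection_prob R w iA iB oA oB) * tensor_map (A oA) (input_tagged B oB iB) \<rho> u v) =
    (\<Sum>rk\<in>{..<R} \<times> K. if rk = (iB, oA) then complex_of_real (w oA) * tensor_map (A oA) (B oA iB) \<rho> u v else 0)"
    by (simp add: sum.reindex inj_on_def summand del: prod.inject)
  also have "\<dots> = complex_of_real (w oA) * tensor_map (A oA) (B oA iB) \<rho> u v"
    by (subst sum.delta) (use assms \<open>iB \<in> {..<R}\<close> \<open>oA \<in> K\<close> in auto)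
  finally show "(\<Sum>oB\<in>prod_encode ` ({..<R} \<times> K).
      complex_of_real (postselection_prob R w iA iB oA oB) * tensor_map (A oA) (input_tagged B oB iB) \<rho> u v) =
    complex_of_real (w oA) * tensor_map (A oA) (B oA iB) \<rho> u v" .
qed

lemma postselection_weights_exist:
  assumes "finite K" "\<forall>k\<in>K. 0 \<le> c k"
  obtains R :: nat and w :: "nat \<Rightarrow> real"
  where "2 \<le> R" "\<forall>k\<in>K. 0 \<le> w k \<and> w k \<le> 1" "\<forall>k\<in>K. c k \<noteq> 0 \<longrightarrow> real R * w k * c k = 1"
proof
  \<comment> \<open>Terms with c k = 0 are harmless since 1 / 0 = 0.\<close>
  define R where "R = nat \<lceil>\<Sum>k\<in>K. 1 / c k\<rceil> + 2"
  show "2 \<le> R" by (simp add: R_def)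
  have large: "1 \<le> real R * c k" if "k \<in> K" "c k \<noteq> 0" for k
  proof -
    have "1 / c k \<le> (\<Sum>k\<in>K. 1 / c k)"
      using assms that by (intro member_le_sum) auto
    also have "\<dots> \<le> real R" unfolding R_def by linarith
    finally have "1 / c k \<le> real R" .
    moreover have "0 < c k" using assms that by (simp add: order_less_le)
    ultimately show ?thesis by (simp add: field_simps)
  qed
  show "\<forall>k\<in>K. 0 \<le> 1 / (real R * c k) \<and> 1 / (real R * c k) \<le> 1"
  proof
    fix k assume "k \<in> K"
    then show "0 \<le> 1 / (real R * c k) \<and> 1 / (real R * c k) \<le> 1"
      using assms large[of k] by (cases "c k = 0") (auto simp: divide_le_eq)
  qed
  show "\<forall>k\<in>K. c k \<noteq> 0 \<longrightarrow> real R * (1 / (real R * c k)) * c k = 1"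
    using \<open>2 \<le> R\<close> by auto
qed

lemma LOCC_star_weighted_product_sum:
  fixes \<M> :: "('x::finite \<times> 'y::finite) op \<Rightarrow> ('a::finite \<times> 'b::finite) op" and K :: "nat set"
  assumes "CPTP \<M>" "finite K"
    and CP: "\<forall>k\<in>K. CP (E k) \<and> CP (F k)"
    and nonneg: "\<forall>k\<in>K. 0 \<le> \<alpha> k \<and> 0 \<le> \<beta> k"
    and TP_E: "\<And>\<rho>. (\<Sum>k\<in>K. complex_of_real (\<alpha> k) * trace_op (E k \<rho>)) = trace_op \<rho>"
    and TP_F: "\<And>\<sigma>. (\<Sum>k\<in>K. complex_of_real (\<beta> k) * trace_op (F k \<sigma>)) = trace_op \<sigma>"
    and vanish: "\<forall>k\<in>K. \<alpha> k * \<beta> k = 0 \<longrightarrow> tensor_map (E k) (F k) = (\<lambda>\<rho> u v. 0)"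
    and \<M>: "\<M> = (\<lambda>\<rho> u v. \<Sum>k\<in>K. tensor_map (E k) (F k) \<rho> u v)"
  shows "\<M> \<in> LOCC_star"
proof -
  obtain R w where R: "2 \<le> R" and w: "\<forall>k\<in>K. 0 \<le> w k \<and> w k \<le> 1"
    and w_inverse: "\<forall>k\<in>K. \<alpha> k * \<beta> k \<noteq> 0 \<longrightarrow> real R * w k * (\<alpha> k * \<beta> k) = 1"
    using postselection_weights_exist[of K "\<lambda>k. \<alpha> k * \<beta> k"] assms(2) nonneg by auto
  define A where "A = weighted_instrument \<alpha> E"
  define B where "B = input_tagged (weighted_instrument \<beta> F)"
  define OB where "OB = prod_encode ` ({..<R} \<times> K)"
  define p where "p = postselection_prob R w"
  have "instruments {0} K A"
    unfolding A_def using assms(2) CP nonneg TP_E by (intro instruments_weighted_instrument) auto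
  moreover have "instruments {..<R} OB B"
    unfolding B_def OB_def using assms(2) CP nonneg TP_F
    by (intro instruments_input_tagged instruments_weighted_instrument) auto
  moreover have "\<forall>iA\<in>{0}. \<forall>iB\<in>{..<R}. \<forall>oA\<in>K. \<forall>oB\<in>OB. 0 \<le> p iA iB oA oB"
    unfolding p_def OB_def using postselection_prob_nonneg[OF w] by blast
  moreover have "\<forall>oA\<in>K. \<forall>oB\<in>OB. (\<Sum>iA\<in>{0}. \<Sum>iB\<in>{..<R}. p iA iB oA oB) = 1"
    unfolding p_def OB_def using R by (auto simp: postselection_prob_sum)
  moreover have "\<M> = (\<lambda>\<rho> u v. \<Sum>iA\<in>{0}. \<Sum>iB\<in>{..<R}. \<Sum>oA\<in>K. \<Sum>oB\<in>OB.
      complex_of_real (p iA iB oA oB) * tensor_map (A oA iA) (B oB iB) \<rho> u v)"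
  proof (intro ext)
    fix \<rho> u v
    have term_weight: "of_nat R * complex_of_real (w k * \<alpha> k * \<beta> k) * tensor_map (E k) (F k) \<rho> u v =
        tensor_map (E k) (F k) \<rho> u v" if "k \<in> K" for k
    proof (cases "\<alpha> k * \<beta> k = 0")
      case True
      then have "tensor_map (E k) (F k) = (\<lambda>\<rho> u v. 0)" using vanish that by blast
      then show ?thesis by simp
    next
      case False
      then have "complex_of_real (real R * w k * (\<alpha> k * \<beta> k)) = 1" using w_inverse that by simp
      then show ?thesis by (simp add: mult.assoc)
    qed
    have "(\<Sum>iA\<in>{0}. \<Sum>iB\<in>{..<R}. \<Sum>oA\<in>K. \<Sum>oB\<in>OB.
        complex_of_real (p iA iB oA oB) * tensor_map (A oA iA) (B oB iB) \<rho> u v) =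
      (\<Sum>iB<R. \<Sum>k\<in>K. complex_of_real (w k) * tensor_map (A k 0) (weighted_instrument \<beta> F k iB) \<rho> u v)"
      unfolding p_def OB_def B_def using postselection_sum[OF assms(2), of R w 0 "\<lambda>k. A k 0"] by simp
    also have "\<dots> = (\<Sum>iB<R. \<Sum>k\<in>K. complex_of_real (w k * \<alpha> k * \<beta> k) * tensor_map (E k) (F k) \<rho> u v)"
      by (simp add: A_def weighted_instrument_def tensor_map_scale_left tensor_map_scale_right mult.assoc)
    also have "\<dots> = (\<Sum>k\<in>K. of_nat R * complex_of_real (w k * \<alpha> k * \<beta> k) * tensor_map (E k) (F k) \<rho> u v)"
      by (simp add: sum_distrib_left mult.assoc)
    also have "\<dots> = \<M> \<rho> u v"
      unfolding \<M> using term_weight by (intro sum.cong) auto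
    finally show "\<M> \<rho> u v = (\<Sum>iA\<in>{0}. \<Sum>iB\<in>{..<R}. \<Sum>oA\<in>K. \<Sum>oB\<in>OB.
        complex_of_real (p iA iB oA oB) * tensor_map (A oA iA) (B oB iB) \<rho> u v)" ..
  qed
  ultimately show ?thesis
    unfolding LOCC_star_def using assms(1) by blast
qed

definition normalized_trace :: "('i::finite op \<Rightarrow> 'j::finite op) \<Rightarrow> real" where
  "normalized_trace F = Re (trace_op (F id_op)) / real CARD('i)"

lemma normalized_trace_nonneg:
  assumes "CP F"
  shows "0 \<le> normalized_trace F"
  using psd_trace_nonneg[OF CP_psd[OF assms psd_id_op]]
  by (simp add: normalized_trace_def less_eq_complex_def)

lemma normalized_trace_times_dim:
  fixes F :: "'i::finite op \<Rightarrow> 'j::finite op"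
  assumes "CP F"
  shows "complex_of_real (normalized_trace F) * trace_op (id_op :: 'i op) = trace_op (F id_op)"
proof -
  have "0 \<le> trace_op (F id_op)" using psd_trace_nonneg[OF CP_psd[OF assms psd_id_op]] .
  then have "complex_of_real (Re (trace_op (F id_op))) = trace_op (F id_op)"
    by (intro of_real_Re nonnegative_complex_is_real)
  then show ?thesis by (simp add: normalized_trace_def trace_id_op)
qed

lemma normalized_trace_zero_imp_zero:
  assumes "CP F" "normalized_trace F = 0"
  shows "F = (\<lambda>M a b. 0)"
  using assms normalized_trace_times_dim[OF assms(1)] by (intro CP_trace_id_zero_imp_zero) simp_all

lemma normalized_marginal_trace:
  fixes E :: "nat \<Rightarrow> 'x::finite op \<Rightarrow> 'a::finite op" and F :: "nat \<Rightarrow> 'y::finite op \<Rightarrow> 'b::finite op"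
  assumes "\<forall>k\<in>K. CP (F k)"
    and product_traces: "(\<Sum>k\<in>K. trace_op (E k \<rho>) * trace_op (F k id_op)) = trace_op \<rho> * trace_op (id_op :: 'y op)"
  shows "(\<Sum>k\<in>K. complex_of_real (normalized_trace (F k)) * trace_op (E k \<rho>)) = trace_op \<rho>"
proof -
  have "(\<Sum>k\<in>K. complex_of_real (normalized_trace (F k)) * trace_op (E k \<rho>)) * trace_op (id_op :: 'y op) =
      (\<Sum>k\<in>K. trace_op (E k \<rho>) * (complex_of_real (normalized_trace (F k)) * trace_op (id_op :: 'y op)))"
    by (simp add: sum_distrib_left sum_distrib_right mult_ac)
  also have "\<dots> = trace_op \<rho> * trace_op (id_op :: 'y op)"
    using assms by (simp add: normalized_trace_times_dim)
  finally show ?thesis by (simp add: trace_id_op)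
qed

lemma SEP_subset_LOCC_star:
  "(SEP :: (('x::finite \<times> 'y::finite) op \<Rightarrow> ('a::finite \<times> 'b::finite) op) set) \<subseteq> LOCC_star"
proof
  fix \<M> :: "('x \<times> 'y) op \<Rightarrow> ('a \<times> 'b) op"
  assume "\<M> \<in> SEP"
  then obtain L and E :: "nat \<Rightarrow> 'x op \<Rightarrow> 'a op" and F :: "nat \<Rightarrow> 'y op \<Rightarrow> 'b op"
    where CPTP: "CPTP \<M>" and CP: "\<forall>k\<in>{1..L}. CP (E k) \<and> CP (F k)"
      and \<M>: "\<M> = (\<lambda>\<rho> u v. \<Sum>k\<in>{1..L}. tensor_map (E k) (F k) \<rho> u v)"
    unfolding SEP_def by blast
  have lin: "\<forall>k\<in>{1..L}. lin_map (E k) \<and> lin_map (F k)"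
    using CP by (simp add: CP_lin_map)
  have "TP (\<lambda>\<rho> u v. \<Sum>k\<in>{1..L}. tensor_map (E k) (F k) \<rho> u v)"
    using CPTP unfolding CPTP_def \<M> by blast
  note product_traces = TP_sum_tensor_map_product_traces[OF this lin]
  have swapped_product_traces:
    "(\<Sum>k\<in>{1..L}. trace_op (F k \<sigma>) * trace_op (E k \<rho>)) = trace_op \<sigma> * trace_op \<rho>" for \<rho> \<sigma>
    using product_traces[of \<rho> \<sigma>] by (simp add: mult.commute)
  have CP_F: "\<forall>k\<in>{1..L}. CP (F k)" and CP_E: "\<forall>k\<in>{1..L}. CP (E k)"
    using CP by auto
  have vanish: "\<forall>k\<in>{1..L}. normalized_trace (F k) * normalized_trace (E k) = 0 \<longrightarrow>
      tensor_map (E k) (F k) = (\<lambda>\<rho> u v. 0)"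
  proof (intro ballI impI)
    fix k assume k: "k \<in> {1..L}" and "normalized_trace (F k) * normalized_trace (E k) = 0"
    then consider "normalized_trace (F k) = 0" | "normalized_trace (E k) = 0" by auto
    then show "tensor_map (E k) (F k) = (\<lambda>\<rho> u v. 0)"
    proof cases
      case 1
      then have "F k = (\<lambda>M a b. 0)" using CP k normalized_trace_zero_imp_zero by blast
      then show ?thesis by (simp add: tensor_map_zero_right)
    next
      case 2
      then have "E k = (\<lambda>M a b. 0)" using CP k normalized_trace_zero_imp_zero by blast
      then show ?thesis by (simp add: tensor_map_zero_left)
    qed
  qed
  have nonneg: "\<forall>k\<in>{1..L}. 0 \<le> normalized_trace (F k) \<and> 0 \<le> normalized_trace (E k)"
    using CP by (simp add: normalized_trace_nonneg)
  have marginal_E: "(\<Sum>k\<in>{1..L}. complex_of_real (normalized_trace (F k)) * trace_op (E k \<rho>)) = trace_op \<rho>"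
    for \<rho>
    using CP_F product_traces by (rule normalized_marginal_trace)
  have marginal_F: "(\<Sum>k\<in>{1..L}. complex_of_real (normalized_trace (E k)) * trace_op (F k \<sigma>)) = trace_op \<sigma>"
    for \<sigma>
    using CP_E swapped_product_traces by (rule normalized_marginal_trace)
  show "\<M> \<in> LOCC_star"
    using CPTP finite_atLeastAtMost CP nonneg marginal_E marginal_F vanish \<M>
    by (rule LOCC_star_weighted_product_sum)
qed

theorem mainTheorem13:
  shows "(LOCC_star :: (('x::finite \<times> 'y::finite) op \<Rightarrow> ('a::finite \<times> 'b::finite) op) set) = SEP"
  using LOCC_star_subset_SEP SEP_subset_LOCC_star by (rule order.antisym)

end
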